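(* Let $S$ be a finite set of positive integers with at least $3$ elements, and suppose there are $a,b\in S$ with $a\ne b$ and $b\mid a$. Then $\Theta(S)\le\Theta(S\setminus\{b\})$, i.e. the modulus $b$ does not increase the robustness bound and may be deleted.
   Context: For a finite set $T$ of positive integers with at least two elements, the (single-stage) robustness bound is $\Theta(T)=\max_{x\in T}\min_{y\in T,\,y\ne x}\gcd(x,y)/4$. *)

theory Defs
  imports Complex_Main
begin

definition Theta :: "nat set \<Rightarrow> real" where
  "Theta T = (MAX x\<in>T. real (MIN y\<in>T - {x}. gcd x y)) / 4"

end

theory Submission
  imports Defs
begin

text \<open>Deleting the divisor b can only raise each inner minimum: for x \<noteq> b the minimum is
taken over fewer elements, and the value attained at b is dominated by the one at a in the
smaller set, because gcd b y divides gcd a y whenever b divides a.\<close>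

definition min_gcd :: "nat set \<Rightarrow> nat \<Rightarrow> nat" where
  "min_gcd T x = (MIN y\<in>T - {x}. gcd x y)"

lemma Theta_eq_min_gcd: "Theta T = (MAX x\<in>T. real (min_gcd T x)) / 4"
  unfolding Theta_def min_gcd_def ..

lemma Max_image_le_Max_image:
  fixes f :: "'a \<Rightarrow> 'c::linorder" and g :: "'b \<Rightarrow> 'c"
  assumes "finite S" "S \<noteq> {}" "finite T"
    and "\<And>x. x \<in> S \<Longrightarrow> \<exists>y\<in>T. f x \<le> g y"
  shows "(MAX x\<in>S. f x) \<le> (MAX y\<in>T. g y)"
proof (rule Max.boundedI)
  fix m assume "m \<in> f ` S"
  then obtain x where x: "x \<in> S" "m = f x" by blast
  with assms(4) obtain y where "y \<in> T" "f x \<le> g y" by blast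
  with assms(3) show "m \<le> (MAX y\<in>T. g y)"
    using x by (metis Max_ge finite_imageI image_eqI order.trans)
qed (use assms(1,2) in auto)

lemma card_ge_3_remove_two_nonempty:
  assumes "finite S" "card S \<ge> 3"
  shows "S - {u} - {v} \<noteq> {}"
proof
  assume "S - {u} - {v} = {}"
  hence "card S \<le> card {u, v}" by (intro card_mono) auto
  also have "\<dots> \<le> 2" by (simp add: card_insert_le_m1)
  finally show False using assms(2) by simp
qed

lemma min_gcd_antimono:
  assumes "finite T" "T' \<subseteq> T" "T' - {x} \<noteq> {}"
  shows "min_gcd T x \<le> min_gcd T' x"
  unfolding min_gcd_def using assms by (intro Min_antimono) auto

lemma min_gcd_divisor_le:
  assumes "finite S" "a \<in> S" "0 < a" "b dvd a" "S - {b} - {a} \<noteq> {}"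
  shows "min_gcd S b \<le> min_gcd (S - {b}) a"
  unfolding min_gcd_def
proof (rule Min.boundedI)
  fix m assume "m \<in> gcd a ` (S - {b} - {a})"
  then obtain y where y: "y \<in> S - {b} - {a}" "m = gcd a y" by blast
  have "(MIN y\<in>S - {b}. gcd b y) \<le> gcd b y"
    using y assms(1) by (intro Min_le) auto
  also have "gcd b y \<le> gcd a y"
    using assms(3,4) by (intro dvd_imp_le gcd_mono dvd_refl) auto
  finally show "(MIN y\<in>S - {b}. gcd b y) \<le> m" using y by simp
qed (use assms(1,5) in auto)

theorem corollary2:
  fixes S :: "nat set" and a b :: nat
  assumes "finite S" and "\<forall>x\<in>S. 0 < x" and "card S \<ge> 3"
    and "a \<in> S" and "b \<in> S" and "a \<noteq> b" and "b dvd a"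
  shows "Theta S \<le> Theta (S - {b})"
proof -
  have nonempty: "S - {u} - {v} \<noteq> {}" for u v
    using assms(1,3) by (rule card_ge_3_remove_two_nonempty)
  have "\<exists>x'\<in>S - {b}. real (min_gcd S x) \<le> real (min_gcd (S - {b}) x')" if "x \<in> S" for x
  proof (cases "x = b")
    case True
    then show ?thesis
      using min_gcd_divisor_le[OF assms(1,4) _ assms(7) nonempty] assms(2,4,6) by auto
  next
    case False
    then show ?thesis
      using min_gcd_antimono[OF assms(1) _ nonempty] that by fastforce
  qed
  then have "(MAX x\<in>S. real (min_gcd S x)) \<le> (MAX x\<in>S - {b}. real (min_gcd (S - {b}) x))"
    using assms(1,4) by (intro Max_image_le_Max_image) auto
  then show ?thesis
    unfolding Theta_eq_min_gcd by (simp add: divide_right_mono)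
qed

end
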